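(* Let $G$ be a scheduling game on related machines with a global priority list $\pi=(1,2,\dots,n)$ (all machines share the same list), where each job may have either positive or negative deterioration (not necessarily delay-averse). Run List Scheduling: set $\ell_j=0$ for all machines; for $i=1,\dots,n$, choose $j^\star\in\arg\min_j\big(\ell_j+p_i(\ell_j)/s_j\big)$, assign job $i$ to $j^\star$ and set $\ell_{j^\star}\leftarrow\ell_{j^\star}+p_i(\ell_{j^\star})/s_{j^\star}$. Then the resulting profile is a pure Nash equilibrium of $G$.
   Context: Scheduling game: a finite set $N$ of $n\ge1$ jobs (players) and a set $M$ of machines. Machine $j$ has speed $s_j>0$ and a priority list $\pi_j$, a bijection $N\to\{1,\dots,n\}$; job $u$ has higher priority than $v$ on $j$ iff $\pi_j(u)<\pi_j(v)$. Each job $i$ has a processing-time function $p_i$: with positive deterioration $p_i(t)=b_i+a_it$ ($b_i,a_i\ge0$), with negative deterioration $p_i(t)=\max\{\tau_i,b_i-a_it\}$ ($b_i,a_i\ge0$, $\tau_i>0$). A profile $\sigma\in M^N$ assigns each job to a machine. On machine $j$, the jobs assigned to it, listed in increasing $\pi_j$-order as $i_1,i_2,\dots$, are processed without idle time (jobs cannot wait): $S_{i_1}(\sigma)=0$, $C_{i_k}(\sigma)=S_{i_k}(\sigma)+p_{i_k}(S_{i_k}(\sigma))/s_j$, $S_{i_{k+1}}(\sigma)=C_{i_k}(\sigma)$. The cost of job $i$ is $C_i(\sigma)$. A pure Nash equilibrium (NE) is a profile in which no job can strictly decrease its completion time by unilaterally changing its machine. *)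

theory Defs
  imports Main "HOL.Real"
begin

text \<open>Jobs are 0,...,n-1; the global priority list ranks job k before job k' iff k < k'.
  Machines are the elements of a finite nonempty set M with speeds s.\<close>

definition pos_det :: "(real \<Rightarrow> real) \<Rightarrow> bool" where
  "pos_det f \<longleftrightarrow> (\<exists>b a. b \<ge> 0 \<and> a \<ge> 0 \<and> (\<forall>t. f t = b + a * t))"

definition neg_det :: "(real \<Rightarrow> real) \<Rightarrow> bool" where
  "neg_det f \<longleftrightarrow> (\<exists>b a tau. b \<ge> 0 \<and> a \<ge> 0 \<and> tau > 0 \<and> (\<forall>t. f t = max tau (b - a * t)))"

text \<open>load p s sigma j k: completion time of the last job among 0..k-1 assigned to j
  under profile sigma (jobs on a machine are processed in priority order without idle time);
  equivalently, the start time on j of a job with priority after jobs 0..k-1.\<close>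

fun load :: "(nat \<Rightarrow> real \<Rightarrow> real) \<Rightarrow> ('m \<Rightarrow> real) \<Rightarrow> (nat \<Rightarrow> 'm) \<Rightarrow> 'm \<Rightarrow> nat \<Rightarrow> real" where
  "load p s \<sigma> j 0 = 0"
| "load p s \<sigma> j (Suc k) =
     (if \<sigma> k = j then load p s \<sigma> j k + p k (load p s \<sigma> j k) / s j else load p s \<sigma> j k)"

definition start_time :: "(nat \<Rightarrow> real \<Rightarrow> real) \<Rightarrow> ('m \<Rightarrow> real) \<Rightarrow> (nat \<Rightarrow> 'm) \<Rightarrow> nat \<Rightarrow> real" where
  "start_time p s \<sigma> i = load p s \<sigma> (\<sigma> i) i"

definition completion :: "(nat \<Rightarrow> real \<Rightarrow> real) \<Rightarrow> ('m \<Rightarrow> real) \<Rightarrow> (nat \<Rightarrow> 'm) \<Rightarrow> nat \<Rightarrow> real" where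
  "completion p s \<sigma> i = start_time p s \<sigma> i + p i (start_time p s \<sigma> i) / s (\<sigma> i)"

definition is_profile :: "nat \<Rightarrow> 'm set \<Rightarrow> (nat \<Rightarrow> 'm) \<Rightarrow> bool" where
  "is_profile n M \<sigma> \<longleftrightarrow> (\<forall>i<n. \<sigma> i \<in> M)"

definition is_NE :: "nat \<Rightarrow> 'm set \<Rightarrow> (nat \<Rightarrow> real \<Rightarrow> real) \<Rightarrow> ('m \<Rightarrow> real) \<Rightarrow> (nat \<Rightarrow> 'm) \<Rightarrow> bool" where
  "is_NE n M p s \<sigma> \<longleftrightarrow> is_profile n M \<sigma> \<and>
     (\<forall>i<n. \<forall>j\<in>M. \<not> (completion p s (\<sigma>(i := j)) i < completion p s \<sigma> i))"

text \<open>sigma is a possible output of List Scheduling (with arbitrary tie-breaking):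
  at step i, with current loads load p s sigma j i, job i is put on a machine minimising
  load + p_i(load)/s.\<close>
definition LS_output :: "nat \<Rightarrow> 'm set \<Rightarrow> (nat \<Rightarrow> real \<Rightarrow> real) \<Rightarrow> ('m \<Rightarrow> real) \<Rightarrow> (nat \<Rightarrow> 'm) \<Rightarrow> bool" where
  "LS_output n M p s \<sigma> \<longleftrightarrow> (\<forall>i<n. \<sigma> i \<in> M \<and>
     (\<forall>j\<in>M. load p s \<sigma> (\<sigma> i) i + p i (load p s \<sigma> (\<sigma> i) i) / s (\<sigma> i)
             \<le> load p s \<sigma> j i + p i (load p s \<sigma> j i) / s j))"

end

theory Submission
  imports Defs
begin

text \<open>Under a global priority list, the start time of job i on any machine depends only on
  the machines chosen by the jobs 0, ..., i-1. Hence a unilateral deviation of job i to machine j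
  yields exactly the completion time load + p_i(load)/s_j that List Scheduling compared when it
  placed job i, and the choice it made was minimal.\<close>

lemma load_fun_upd_later:
  "k \<le> i \<Longrightarrow> load p s (\<sigma>(i := j)) m k = load p s \<sigma> m k"
  by (induction k) auto

lemma completion_eq_load:
  "completion p s \<sigma> i = load p s \<sigma> (\<sigma> i) i + p i (load p s \<sigma> (\<sigma> i) i) / s (\<sigma> i)"
  by (simp add: completion_def start_time_def)

lemma completion_fun_upd_self:
  "completion p s (\<sigma>(i := j)) i = load p s \<sigma> j i + p i (load p s \<sigma> j i) / s j"
  by (simp add: completion_eq_load load_fun_upd_later)

theorem theorem3:
  fixes n :: nat and M :: "'m set" and s :: "'m \<Rightarrow> real"
    and p :: "nat \<Rightarrow> real \<Rightarrow> real" and \<sigma> :: "nat \<Rightarrow> 'm"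
  assumes "n \<ge> 1"
    and "finite M" and "M \<noteq> {}"
    and "\<forall>j\<in>M. s j > 0"
    and "\<forall>i<n. pos_det (p i) \<or> neg_det (p i)"
    and LS: "LS_output n M p s \<sigma>"
  shows "is_NE n M p s \<sigma>"
proof -
  have "is_profile n M \<sigma>"
    using LS by (simp add: LS_output_def is_profile_def)
  moreover have "completion p s \<sigma> i \<le> completion p s (\<sigma>(i := j)) i" if "i < n" "j \<in> M" for i j
    unfolding completion_fun_upd_self unfolding completion_eq_load
    using LS that by (simp add: LS_output_def)
  ultimately show ?thesis
    by (simp add: is_NE_def not_less)
qed

end
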